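(* For every integer $n\ge 2$, the complete graph $K_n$ satisfies $IDI(K_n)=n$.
   Context: For a finite simple connected graph $G=(V,E)$ with diameter $d$, a rank assignment is a function $f:V\to\mathbb{R}$; under $f$, the string of a vertex $v$ is the $d$-vector whose $i$-th coordinate is the sum of $f(w)$ over all vertices $w$ with $d(v,w)=i$. The ID-index $IDI(G)$ is the minimum $k$ such that there exists $f:V\to\mathbb{R}$ with $|f(V)|=k$ under which all vertices have distinct strings. *)

theory Defs
  imports Complex_Main
begin

definition simple_graph :: "'a set \<Rightarrow> ('a \<Rightarrow> 'a \<Rightarrow> bool) \<Rightarrow> bool" where
  "simple_graph V E \<longleftrightarrow> finite V \<and> V \<noteq> {} \<and>
     (\<forall>u v. E u v \<longrightarrow> u \<in> V \<and> v \<in> V) \<and>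
     (\<forall>u v. E u v \<longrightarrow> E v u) \<and> (\<forall>u. \<not> E u u)"

definition connected_graph :: "'a set \<Rightarrow> ('a \<Rightarrow> 'a \<Rightarrow> bool) \<Rightarrow> bool" where
  "connected_graph V E \<longleftrightarrow> (\<forall>u\<in>V. \<forall>v\<in>V. \<exists>k. (E ^^ k) u v)"

definition gdist :: "('a \<Rightarrow> 'a \<Rightarrow> bool) \<Rightarrow> 'a \<Rightarrow> 'a \<Rightarrow> nat" where
  "gdist E u v = (LEAST k. (E ^^ k) u v)"

definition diameter :: "'a set \<Rightarrow> ('a \<Rightarrow> 'a \<Rightarrow> bool) \<Rightarrow> nat" where
  "diameter V E = Max {gdist E u v | u v. u \<in> V \<and> v \<in> V}"

text \<open>The string of v under rank assignment f: the d-vector whose i-th coordinate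
(1 \<le> i \<le> d) is the sum of f over vertices at distance i from v; represented as a
function on nat that is 0 outside {1..d}.\<close>
definition vstring :: "'a set \<Rightarrow> ('a \<Rightarrow> 'a \<Rightarrow> bool) \<Rightarrow> ('a \<Rightarrow> real) \<Rightarrow> 'a \<Rightarrow> nat \<Rightarrow> real" where
  "vstring V E f v = (\<lambda>i. if 1 \<le> i \<and> i \<le> diameter V E
      then (\<Sum>w\<in>{w\<in>V. gdist E v w = i}. f w) else 0)"

definition IDI :: "'a set \<Rightarrow> ('a \<Rightarrow> 'a \<Rightarrow> bool) \<Rightarrow> nat" where
  "IDI V E = (LEAST k. \<exists>f :: 'a \<Rightarrow> real. card (f ` V) = k \<and> inj_on (vstring V E f) V)"

definition complete_graph_V :: "nat \<Rightarrow> nat set" where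
  "complete_graph_V n = {..<n}"

definition complete_graph_E :: "nat \<Rightarrow> nat \<Rightarrow> nat \<Rightarrow> bool" where
  "complete_graph_E n u v \<longleftrightarrow> u < n \<and> v < n \<and> u \<noteq> v"

end

theory Submission
  imports Defs
begin

(* In K_n (n \<ge> 2) the diameter is 1 and every other vertex lies at distance 1 from v,
   so the string of v is the single number (\<Sum>w. f w) - f v.  Hence the strings are
   distinct exactly when f is injective, and the least number of rank values is n. *)

lemma gdist_self: "gdist E u u = 0"
  unfolding gdist_def by (intro Least_equality) auto

lemma gdist_adjacent:
  assumes "E u v" "u \<noteq> v"
  shows "gdist E u v = 1"
  unfolding gdist_def
proof (rule Least_equality)
  show "(E ^^ 1) u v" using assms(1) by (simp only: relpowp_1)
  fix k assume "(E ^^ k) u v"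
  then show "1 \<le> k" using assms(2) by (cases k) auto
qed

lemma gdist_complete_graph:
  assumes "u < n" "v < n"
  shows "gdist (complete_graph_E n) u v = (if u = v then 0 else 1)"
  using assms by (simp add: gdist_self gdist_adjacent complete_graph_E_def)

lemma diameter_complete_graph:
  assumes "n \<ge> 2"
  shows "diameter (complete_graph_V n) (complete_graph_E n) = 1"
proof -
  let ?D = "{gdist (complete_graph_E n) u v | u v.
              u \<in> complete_graph_V n \<and> v \<in> complete_graph_V n}"
  have D_sub: "?D \<subseteq> {0, 1}"
    by (auto simp: gdist_complete_graph complete_graph_V_def)
  have "0 \<in> complete_graph_V n" "1 \<in> complete_graph_V n"
    using assms by (simp_all add: complete_graph_V_def)
  then have "gdist (complete_graph_E n) 0 0 \<in> ?D" "gdist (complete_graph_E n) 0 1 \<in> ?D"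
    by blast+
  then have "{0, 1} \<subseteq> ?D"
    using assms by (simp add: gdist_complete_graph)
  with D_sub have "?D = {0, 1}"
    by (rule subset_antisym)
  then show ?thesis unfolding diameter_def by simp
qed

lemma vstring_complete_graph:
  assumes "n \<ge> 2" "v < n"
  shows "vstring (complete_graph_V n) (complete_graph_E n) f v
     = (\<lambda>i. if i = 1 then (\<Sum>w<n. f w) - f v else 0)"
proof -
  have "{w \<in> complete_graph_V n. gdist (complete_graph_E n) v w = 1} = {..<n} - {v}"
    using assms(2) by (auto simp: gdist_complete_graph complete_graph_V_def)
  moreover have "(\<Sum>w\<in>{..<n} - {v}. f w) = (\<Sum>w<n. f w) - f v"
    using assms(2) by (simp add: sum_diff1)
  ultimately show ?thesis
    unfolding vstring_def diameter_complete_graph[OF assms(1)]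
    by (intro ext) (simp add: order.eq_iff[symmetric])
qed

lemma inj_on_vstring_complete_graph_iff:
  assumes "n \<ge> 2"
  shows "inj_on (vstring (complete_graph_V n) (complete_graph_E n) f) (complete_graph_V n)
     \<longleftrightarrow> inj_on f (complete_graph_V n)"
proof -
  have "vstring (complete_graph_V n) (complete_graph_E n) f u
          = vstring (complete_graph_V n) (complete_graph_E n) f v \<longleftrightarrow> f u = f v"
    if "u < n" "v < n" for u v
    using that by (simp add: vstring_complete_graph[OF assms] fun_eq_iff)
  then show ?thesis unfolding inj_on_def complete_graph_V_def by auto
qed

lemma IDI_eq_card_if_inj_on_vstring_iff:
  assumes "finite V" and "\<And>f. inj_on (vstring V E f) V \<longleftrightarrow> inj_on f V"
  shows "IDI V E = card V"
  unfolding IDI_def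
proof (rule Least_equality)
  obtain g :: "'a \<Rightarrow> nat" where "inj_on g V"
    using assms(1) finite_imp_inj_to_nat_seg by blast
  then have "inj_on (real \<circ> g) V"
    by (simp add: inj_on_def)
  then show "\<exists>f :: 'a \<Rightarrow> real. card (f ` V) = card V \<and> inj_on (vstring V E f) V"
    using assms(2) card_image by blast
next
  fix k assume "\<exists>f :: 'a \<Rightarrow> real. card (f ` V) = k \<and> inj_on (vstring V E f) V"
  then show "card V \<le> k"
    using assms(2) card_image by fastforce
qed

theorem mainTheorem11:
  fixes n :: nat
  assumes "n \<ge> 2"
  shows "IDI (complete_graph_V n) (complete_graph_E n) = n"
proof -
  have "finite (complete_graph_V n)"
    by (simp add: complete_graph_V_def)
  then have "IDI (complete_graph_V n) (complete_graph_E n) = card (complete_graph_V n)"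
    using IDI_eq_card_if_inj_on_vstring_iff inj_on_vstring_complete_graph_iff[OF assms] by blast
  then show ?thesis
    by (simp add: complete_graph_V_def)
qed

end
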